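(* Let $n$ be even. The expected runtime of the SD-(1+1) EA with parameter $R$, where $n+1\le R\le n^{O(1)}$, on $\mathrm{LeadingOnes}$ is $O(n^2)$.
   Context: $\mathrm{LeadingOnes}(x_1,\dots,x_n)=\sum_{i=1}^n\prod_{j=1}^i x_j$. The SD-(1+1) EA with parameter $R\ge1$ maximizing $f\colon\{0,1\}^n\to\mathbb{R}$ ($n$ even) works as follows: choose $x$ uniformly at random from $\{0,1\}^n$, set strength $r\gets 1$ and counter $u\gets0$. In each iteration: create $y$ from $x$ by flipping each bit independently with probability $r/n$; set $u\gets u+1$. If $f(y)>f(x)$, set $x\gets y$, $r\gets1$, $u\gets0$. Otherwise, if $f(y)=f(x)$ and $r=1$, set $x\gets y$; and (in the case $f(y)\le f(x)$) if $u>2(en/r)^r\ln(nR)$, set $r\gets\min\{r+1,n/2\}$ and $u\gets 0$. The runtime is the number of iterations until a global maximum is first created. *)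

theory Defs
  imports "HOL-Probability.Probability"
begin

text \<open>Bit strings of length n are represented as bool lists; bit x_i is xs ! (i-1).\<close>

definition LeadingOnes :: "bool list \<Rightarrow> nat" where
  "LeadingOnes xs = (\<Sum>i<length xs. \<Prod>j\<le>i. (if xs ! j then 1 else 0))"

fun mutate :: "real \<Rightarrow> bool list \<Rightarrow> bool list pmf" where
  "mutate p [] = return_pmf []"
| "mutate p (b # bs) =
     bind_pmf (bernoulli_pmf p) (\<lambda>c.
     bind_pmf (mutate p bs) (\<lambda>bs'. return_pmf ((if c then \<not> b else b) # bs')))"

definition optimal :: "(bool list \<Rightarrow> real) \<Rightarrow> nat \<Rightarrow> bool list \<Rightarrow> bool" where
  "optimal f n y \<longleftrightarrow> (\<forall>z. length z = n \<longrightarrow> f z \<le> f y)"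

text \<open>State: (current search point x, strength r, counter u, global optimum already created?).\<close>
type_synonym sd_state = "bool list \<times> nat \<times> nat \<times> bool"

definition sd_update ::
  "(bool list \<Rightarrow> real) \<Rightarrow> nat \<Rightarrow> real \<Rightarrow> bool list \<Rightarrow> nat \<Rightarrow> nat \<Rightarrow> bool list \<Rightarrow> sd_state" where
  "sd_update f n R x r u y =
     (let u' = u + 1; fd = optimal f n y in
      if f y > f x then (y, 1, 0, fd)
      else (let x' = (if f y = f x \<and> r = 1 then y else x) in
            if real u' > 2 * (exp 1 * real n / real r) ^ r * ln (real n * R)
            then (x', min (r + 1) (n div 2), 0, fd)
            else (x', r, u', fd)))"

definition sd_step :: "(bool list \<Rightarrow> real) \<Rightarrow> nat \<Rightarrow> real \<Rightarrow> sd_state \<Rightarrow> sd_state pmf" where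
  "sd_step f n R s = (case s of (x, r, u, fd) \<Rightarrow>
     if fd then return_pmf s
     else map_pmf (sd_update f n R x r u) (mutate (real r / real n) x))"

definition sd_init :: "(bool list \<Rightarrow> real) \<Rightarrow> nat \<Rightarrow> sd_state pmf" where
  "sd_init f n = map_pmf (\<lambda>x. (x, 1, 0, optimal f n x)) (pmf_of_set {xs. length xs = n})"

fun sd_state_after :: "(bool list \<Rightarrow> real) \<Rightarrow> nat \<Rightarrow> real \<Rightarrow> nat \<Rightarrow> sd_state pmf" where
  "sd_state_after f n R 0 = sd_init f n"
| "sd_state_after f n R (Suc t) = bind_pmf (sd_state_after f n R t) (sd_step f n R)"

text \<open>Expected runtime E[T] = sum over t of Pr[T > t], where T is the number of iterations
  until a global maximum is first created (T = 0 if the initial point is optimal).\<close>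
definition sd_expected_runtime :: "(bool list \<Rightarrow> real) \<Rightarrow> nat \<Rightarrow> real \<Rightarrow> ennreal" where
  "sd_expected_runtime f n R =
     (\<Sum>t. ennreal (measure_pmf.prob (sd_state_after f n R t) {s. \<not> snd (snd (snd s))}))"

end

theory Submission
  imports Defs
begin

text \<open>A potential-function argument. A non-optimal state \<open>(x, r, u)\<close> gets the potential
  \<open>A (n - LeadingOnes x) + W r u\<close>: every fitness level is charged a budget \<open>A\<close>, and
  \<open>W r u\<close> pays for the steps spent at strengths \<open>r \<ge> 2\<close>. At strength \<open>r\<close> an improvement
  has probability at least \<open>p\<^sub>r = (r/n)(1 - r/n)\<^sup>n\<^sup>-\<^sup>1\<close>, and the phase length
  \<open>T\<^sub>r = 2 (en/r)\<^sup>r ln (nR)\<close> satisfies \<open>p\<^sub>r T\<^sub>r \<ge> ln (nR)\<close>, so a whole phase fails with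
  probability at most \<open>1/(nR)\<close>. Since \<open>R > n\<close>, this is small enough to pay for the
  (at most \<open>en\<close> times longer) next phase, and one can choose \<open>W\<close> so that the expected
  potential drops by at least one in every iteration. The expected runtime is then bounded
  by the initial potential, which is \<open>O(n\<^sup>2)\<close>.\<close>

section \<open>LeadingOnes and standard bit mutation\<close>

lemma LeadingOnes_Nil [simp]: "LeadingOnes [] = 0"
  by (simp add: LeadingOnes_def)

lemma LeadingOnes_Cons [simp]: "LeadingOnes (b # bs) = (if b then Suc (LeadingOnes bs) else 0)"
proof -
  have "LeadingOnes (b # bs) = (\<Sum>i<Suc (length bs). \<Prod>j\<le>i. (if (b # bs) ! j then 1 else 0))"
    by (simp add: LeadingOnes_def)
  also have "\<dots> = (if b then 1 else 0) + (\<Sum>i<length bs. \<Prod>j\<le>Suc i. (if (b # bs) ! j then 1 else 0))"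
    by (subst sum.lessThan_Suc_shift) simp
  also have "\<dots> = (if b then 1 else 0) + (\<Sum>i<length bs. (if b then 1 else 0) * (\<Prod>j\<le>i. (if bs ! j then 1 else 0)))"
    by (simp only: prod.atMost_Suc_shift) simp
  finally show ?thesis by (simp add: LeadingOnes_def sum_distrib_left[symmetric])
qed

lemma LeadingOnes_le_length: "LeadingOnes xs \<le> length xs"
  by (induction xs) auto

lemma LeadingOnes_replicate_True: "LeadingOnes (replicate m True) = m"
  by (induction m) auto

abbreviation LO :: "bool list \<Rightarrow> real" where
  "LO \<equiv> \<lambda>x. real (LeadingOnes x)"

lemma optimal_LeadingOnes_iff:
  assumes "length y = n"
  shows "optimal LO n y \<longleftrightarrow> LeadingOnes y = n"
proof
  assume "optimal LO n y"
  then have "LeadingOnes (replicate n True) \<le> LeadingOnes y"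
    unfolding optimal_def by (metis length_replicate of_nat_le_iff)
  then show "LeadingOnes y = n"
    using LeadingOnes_le_length[of y] assms by (simp add: LeadingOnes_replicate_True)
next
  assume "LeadingOnes y = n"
  then show "optimal LO n y"
    unfolding optimal_def of_nat_le_iff by (metis LeadingOnes_le_length)
qed

lemma length_mutate: "y \<in> set_pmf (mutate p xs) \<Longrightarrow> length y = length xs"
  by (induction xs arbitrary: y) auto

lemma emeasure_mutate_Cons:
  assumes "0 \<le> p" "p \<le> 1"
  shows "emeasure (mutate p (b # bs)) A =
    emeasure (mutate p bs) {ys. (\<not> b) # ys \<in> A} * ennreal p
    + emeasure (mutate p bs) {ys. b # ys \<in> A} * ennreal (1 - p)"
  using assms by (simp add: map_pmf_def[symmetric] vimage_def)

text \<open>Flip the first zero bit and none of the leading ones.\<close>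
lemma emeasure_mutate_LeadingOnes_increase:
  assumes "0 \<le> p" "p \<le> 1" "LeadingOnes xs < length xs"
  shows "ennreal (p * (1 - p) ^ LeadingOnes xs) \<le> emeasure (mutate p xs) {y. LeadingOnes xs < LeadingOnes y}"
  using assms(3)
proof (induction xs)
  case (Cons b bs)
  show ?case
  proof (cases b)
    case False
    then show ?thesis
      using assms by (simp add: emeasure_mutate_Cons del: mutate.simps)
  next
    case True
    then have "ennreal (p * (1 - p) ^ LeadingOnes (b # bs))
        = ennreal (p * (1 - p) ^ LeadingOnes bs) * ennreal (1 - p)"
      using assms by (simp add: ennreal_mult'[symmetric] mult_ac)
    also have "\<dots> \<le> emeasure (mutate p bs) {y. LeadingOnes bs < LeadingOnes y} * ennreal (1 - p)"
      using Cons True by (intro mult_right_mono) auto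
    also have "\<dots> = emeasure (mutate p (b # bs)) {y. LeadingOnes (b # bs) < LeadingOnes y}"
      using assms True by (simp add: emeasure_mutate_Cons del: mutate.simps)
    finally show ?thesis .
  qed
qed simp

section \<open>Expected hitting times via a potential\<close>

lemma sum_prob_le_potential:
  fixes \<mu> :: "nat \<Rightarrow> 'a pmf" and K :: "'a \<Rightarrow> 'a pmf" and \<Phi> :: "'a \<Rightarrow> ennreal"
  assumes chain: "\<And>t. \<mu> (Suc t) = bind_pmf (\<mu> t) K"
    and drift: "\<And>s. (\<integral>\<^sup>+s'. \<Phi> s' \<partial>K s) + indicator A s \<le> \<Phi> s"
  shows "(\<integral>\<^sup>+s. \<Phi> s \<partial>\<mu> t) + (\<Sum>j<t. ennreal (measure_pmf.prob (\<mu> j) A)) \<le> (\<integral>\<^sup>+s. \<Phi> s \<partial>\<mu> 0)"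
proof (induction t)
  case (Suc t)
  let ?P = "\<lambda>j. ennreal (measure_pmf.prob (\<mu> j) A)"
  have "(\<integral>\<^sup>+s. \<Phi> s \<partial>\<mu> (Suc t)) + ?P t
      = (\<integral>\<^sup>+s. (\<integral>\<^sup>+s'. \<Phi> s' \<partial>K s) \<partial>\<mu> t) + (\<integral>\<^sup>+s. indicator A s \<partial>\<mu> t)"
    by (simp add: chain measure_pmf.emeasure_eq_measure)
  also have "\<dots> = (\<integral>\<^sup>+s. (\<integral>\<^sup>+s'. \<Phi> s' \<partial>K s) + indicator A s \<partial>\<mu> t)"
    by (rule nn_integral_add[symmetric]) auto
  also have "\<dots> \<le> (\<integral>\<^sup>+s. \<Phi> s \<partial>\<mu> t)"
    by (intro nn_integral_mono drift)
  finally have "(\<integral>\<^sup>+s. \<Phi> s \<partial>\<mu> (Suc t)) + (\<Sum>j<Suc t. ?P j) \<le> (\<integral>\<^sup>+s. \<Phi> s \<partial>\<mu> t) + (\<Sum>j<t. ?P j)"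
    by (simp add: add.assoc add_right_mono)
  then show ?case
    using Suc.IH by (rule order.trans)
qed simp

lemma suminf_prob_le_potential:
  fixes \<mu> :: "nat \<Rightarrow> 'a pmf" and K :: "'a \<Rightarrow> 'a pmf" and \<Phi> :: "'a \<Rightarrow> ennreal"
  assumes "\<And>t. \<mu> (Suc t) = bind_pmf (\<mu> t) K"
    and "\<And>s. (\<integral>\<^sup>+s'. \<Phi> s' \<partial>K s) + indicator A s \<le> \<Phi> s"
  shows "(\<Sum>t. ennreal (measure_pmf.prob (\<mu> t) A)) \<le> (\<integral>\<^sup>+s. \<Phi> s \<partial>\<mu> 0)"
proof (rule suminf_le_const)
  fix t
  show "(\<Sum>j<t. ennreal (measure_pmf.prob (\<mu> j) A)) \<le> (\<integral>\<^sup>+s. \<Phi> s \<partial>\<mu> 0)"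
    using sum_prob_le_potential[where \<mu>=\<mu> and K=K and \<Phi>=\<Phi> and A=A, OF assms, of t]
    by (metis add_increasing zero_le order.refl order.trans)
qed auto

lemma nn_integral_pmf_le_two_level:
  assumes f: "\<And>y. y \<in> set_pmf M \<Longrightarrow> f y \<le> ennreal (if y \<in> S then a else b)"
    and ab: "0 \<le> a" "a \<le> b" and q: "q \<le> measure_pmf.prob M S"
  shows "(\<integral>\<^sup>+y. f y \<partial>M) \<le> ennreal (b - q * (b - a))"
proof -
  define P where "P = measure_pmf.prob M S"
  have P: "0 \<le> P" "P \<le> 1" by (simp_all add: P_def)
  have "(\<integral>\<^sup>+y. f y \<partial>M) \<le> (\<integral>\<^sup>+y. ennreal a * indicator S y + ennreal b * indicator (- S) y \<partial>M)"
    by (intro nn_integral_mono_AE AE_pmfI order.trans[OF f]) (auto simp: indicator_def)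
  also have "\<dots> = ennreal a * ennreal P + ennreal b * ennreal (1 - P)"
    using measure_pmf.prob_compl[of S M]
    by (simp add: nn_integral_add nn_integral_cmult measure_pmf.emeasure_eq_measure P_def Compl_eq_Diff_UNIV)
  also have "\<dots> = ennreal (a * P + b * (1 - P))"
    using ab P by (simp add: ennreal_mult ennreal_plus)
  also have "\<dots> = ennreal (b - P * (b - a))"
    by (simp add: algebra_simps)
  also have "\<dots> \<le> ennreal (b - q * (b - a))"
    using q ab by (intro ennreal_leI diff_left_mono mult_right_mono) (auto simp: P_def)
  finally show ?thesis .
qed

lemma ln_one_minus_ge:
  fixes x :: real
  assumes "0 \<le> x" "x \<le> 1/2"
  shows "- x - x\<^sup>2 \<le> ln (1 - x)"
proof -
  let ?g = "\<lambda>t::real. ln (1 - t) + t + t\<^sup>2"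
  have "?g 0 \<le> ?g x"
  proof (rule DERIV_nonneg_imp_nondecreasing[OF assms(1)])
    fix t :: real
    assume t: "0 \<le> t" "t \<le> x"
    have "(?g has_real_derivative (- 1 / (1 - t) + 1 + 2 * t)) (at t)"
      using t assms by (auto intro!: derivative_eq_intros)
    moreover have "- 1 / (1 - t) + 1 + 2 * t = t * (1 - 2 * t) / (1 - t)"
      using t assms by (simp add: field_simps)
    moreover have "0 \<le> t * (1 - 2 * t) / (1 - t)"
      using t assms by (intro divide_nonneg_pos mult_nonneg_nonneg) auto
    ultimately show "\<exists>y. (?g has_real_derivative y) (at t) \<and> 0 \<le> y"
      by auto
  qed
  then show ?thesis by simp
qed

lemma exp_neg_le_one_minus_power:
  fixes x :: real
  assumes "0 \<le> x" "x \<le> 1/2"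
  shows "exp (- (m * x) - m * x\<^sup>2) \<le> (1 - x) ^ m"
proof -
  have "exp (- (m * x) - m * x\<^sup>2) = exp (m * (- x - x\<^sup>2))"
    by (simp add: algebra_simps)
  also have "\<dots> \<le> exp (m * ln (1 - x))"
    using ln_one_minus_ge[OF assms] by (intro exp_mono mult_left_mono) auto
  also have "\<dots> = (1 - x) ^ m"
    using assms by (subst ln_realpow[symmetric]) auto
  finally show ?thesis .
qed

lemma exp_half_le_2: "exp (1/2::real) \<le> 2"
proof -
  have "exp (1/2::real) ^ 2 = exp 1"
    by (simp flip: exp_of_nat_mult)
  also have "\<dots> \<le> 2 ^ 2"
    using exp_le by simp
  finally show ?thesis
    by (rule power2_le_imp_le) simp
qed

lemma one_le_phase_length_times_success_prob:
  fixes n r :: nat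
  assumes "1 \<le> r" "2 * r \<le> n"
  shows "1 \<le> 2 * (exp 1 * n / r) ^ r * (r / n) * (1 - r / n) ^ (n - 1)"
proof -
  define x where "x = real r / real n"
  define y where "y = real n / real r"
  have pos: "real n > 0" "real r > 0"
    using assms by auto
  have x: "0 \<le> x" "x \<le> 1/2" and y: "2 \<le> y"
    using assms pos by (auto simp: x_def y_def field_simps)
  have "exp (- real r - real r * x) = exp (- (n * x) - n * x\<^sup>2)"
    using pos by (simp add: x_def power2_eq_square field_simps)
  also have "\<dots> \<le> (1 - x) ^ n"
    using exp_neg_le_one_minus_power[OF x] .
  also have "\<dots> \<le> (1 - x) ^ (n - 1)"
    using x by (intro power_decreasing) auto
  finally have one_minus_x: "exp (- real r - real r * x) \<le> (1 - x) ^ (n - 1)" .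
  have power_r: "2 ^ r = 2 * (2::real) ^ (r - 1)" "y ^ r = y * y ^ (r - 1)"
    using assms by (simp_all add: power_eq_if)
  have "1 \<le> (2 * exp (-1/2 :: real)) ^ r"
    using exp_half_le_2 by (intro one_le_power) (simp add: exp_minus field_simps)
  also have "\<dots> = 2 * 2 ^ (r - 1) * (exp (real r) * exp (- real r - real r / 2))"
    by (simp add: power_mult_distrib power_r mult_exp_exp flip: exp_of_nat_mult)
  also have "\<dots> \<le> 2 * y ^ (r - 1) * (exp (real r) * exp (- real r - real r * x))"
    using x y mult_left_mono[of x "1/2" "real r"] by (intro mult_mono power_mono mult_left_mono) auto
  also have "\<dots> \<le> 2 * y ^ (r - 1) * (exp (real r) * (1 - x) ^ (n - 1))"
    using one_minus_x y by (intro mult_left_mono) auto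
  also have "\<dots> = 2 * y ^ (r - 1) * (exp (real r) * (1 - x) ^ (n - 1)) * (y * x)"
    using pos by (simp add: x_def y_def)
  also have "\<dots> = 2 * (exp 1 ^ r * y ^ r) * x * (1 - x) ^ (n - 1)"
    by (simp add: power_r(2) mult_ac flip: exp_of_nat_mult)
  also have "\<dots> = 2 * (exp 1 * n / r) ^ r * (r / n) * (1 - r / n) ^ (n - 1)"
    unfolding x_def y_def by (simp add: power_mult_distrib[symmetric] times_divide_eq_right)
  finally show ?thesis .
qed

section \<open>A potential for the SD-(1+1) EA on LeadingOnes\<close>

abbreviation unfinished :: "sd_state set" where
  "unfinished \<equiv> {s. \<not> snd (snd (snd s))}"

locale sd_leading_ones =
  fixes n :: nat and R :: real
  assumes six_le_n: "6 \<le> n" and n_plus_1_le_R: "real n + 1 \<le> R"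
begin

definition phase_length :: "nat \<Rightarrow> real" where
  "phase_length r = 2 * (exp 1 * real n / real r) ^ r * ln (real n * R)"

definition success_prob :: "nat \<Rightarrow> real" where
  "success_prob r = real r / real n * (1 - real r / real n) ^ (n - 1)"

definition next_strength :: "nat \<Rightarrow> nat" where
  "next_strength r = min (r + 1) (n div 2)"

text \<open>\<open>strength_cost r\<close> bounds the expected number of steps spent at strengths \<open>\<ge> r \<ge> 2\<close>
  once strength \<open>r\<close> has been reached; \<open>strength_potential r u\<close> is the remaining share of
  it at counter \<open>u\<close>: the rest of the current phase (steps at strength 1 are paid by the
  fitness levels instead) plus the cost of the next strength, weighted with the probability
  \<open>(1 - p\<^sub>r)\<^bsup>T\<^sub>r - u\<^esup>\<close> of reaching it.\<close>
definition strength_cost :: "nat \<Rightarrow> real" where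
  "strength_cost r = 2 * (phase_length r + 1)"

definition strength_potential :: "nat \<Rightarrow> nat \<Rightarrow> real" where
  "strength_potential r u =
     (1 - success_prob r) powr (phase_length r - real u) * strength_cost (next_strength r)
     + (if r = 1 then 0 else phase_length r - real u + 1)"

definition potential_after_failure :: "nat \<Rightarrow> nat \<Rightarrow> real" where
  "potential_after_failure r u =
     (if phase_length r < real (u + 1) then strength_potential (next_strength r) 0
      else strength_potential r (u + 1))"

definition level_cost :: real where
  "level_cost = strength_potential 1 0 + 2 * exp 1 * real n"

lemma nR_bounds: "6 * real n \<le> real n * R" "2 \<le> real n * R"
proof -
  have "6 \<le> R"
    using six_le_n n_plus_1_le_R by simp
  then show "6 * real n \<le> real n * R"
    using mult_left_mono[of 6 R "real n"] by (simp add: mult.commute)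
  then show "2 \<le> real n * R"
    using six_le_n by linarith
qed

lemma ln_nR_pos: "0 < ln (real n * R)"
  using nR_bounds by simp

lemma phase_length_nonneg: "0 \<le> phase_length r"
  using ln_nR_pos by (simp add: phase_length_def)

lemma success_prob_bounds:
  assumes "1 \<le> r" "r \<le> n div 2"
  shows "0 < success_prob r" "success_prob r \<le> 1/2"
proof -
  have x: "0 < real r / real n" "real r / real n \<le> 1/2"
    using assms six_le_n by (auto simp: field_simps)
  have pos: "0 < (1 - real r / real n) ^ (n - 1)"
    using x by (intro zero_less_power) linarith
  have le1: "(1 - real r / real n) ^ (n - 1) \<le> 1"
    using x by (intro power_le_one) linarith+
  show "0 < success_prob r"
    unfolding success_prob_def using x pos by (intro mult_pos_pos)
  have "success_prob r \<le> real r / real n * 1"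
    unfolding success_prob_def using x le1 by (intro mult_left_mono) auto
  then show "success_prob r \<le> 1/2"
    using x by linarith
qed

lemma ln_nR_le_success_prob_phase_length:
  assumes "1 \<le> r" "r \<le> n div 2"
  shows "ln (real n * R) \<le> success_prob r * phase_length r"
  using mult_right_mono[OF one_le_phase_length_times_success_prob less_imp_le[OF ln_nR_pos]] assms
  by (simp add: success_prob_def phase_length_def mult_ac)

lemma one_le_success_prob_1: "1 \<le> success_prob 1 * (2 * exp 1 * real n)"
  using one_le_phase_length_times_success_prob[of 1 n] six_le_n
  by (simp add: success_prob_def mult_ac)

lemma phase_failure_prob_le:
  assumes "1 \<le> r" "r \<le> n div 2"
  shows "(1 - success_prob r) powr phase_length r \<le> 1 / (real n * R)"
proof -
  have p: "0 < success_prob r" "success_prob r \<le> 1/2"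
    using success_prob_bounds[OF assms] by auto
  have "(1 - success_prob r) powr phase_length r \<le> exp (- success_prob r) powr phase_length r"
    using p phase_length_nonneg exp_ge_add_one_self[of "- success_prob r"]
    by (intro powr_mono2) auto
  also have "\<dots> = exp (- (success_prob r * phase_length r))"
    by (simp add: powr_def)
  also have "\<dots> \<le> exp (- ln (real n * R))"
    using ln_nR_le_success_prob_phase_length[OF assms] by simp
  also have "\<dots> = 1 / (real n * R)"
    using nR_bounds by (simp add: exp_minus inverse_eq_divide)
  finally show ?thesis .
qed

lemma next_strength_bounds:
  assumes "1 \<le> r" "r \<le> n div 2"
  shows "2 \<le> next_strength r" "next_strength r \<le> n div 2"
  using assms six_le_n by (auto simp: next_strength_def)

lemma phase_length_next_strength_le:
  assumes "1 \<le> r" "r \<le> n div 2"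
  shows "phase_length (next_strength r) \<le> exp 1 * real n * phase_length r"
proof (cases "r + 1 \<le> n div 2")
  case True
  have pos: "0 < real n" "0 < real r"
    using six_le_n assms by auto
  have "(exp 1 * n / (r + 1)) ^ (r + 1) = (exp 1 * n / (r + 1)) * (exp 1 * n / (r + 1)) ^ r"
    by simp
  also have "\<dots> \<le> (exp 1 * n) * (exp 1 * n / r) ^ r"
  proof (intro mult_mono power_mono)
    show "exp 1 * n / (r + 1) \<le> exp 1 * n"
      using pos by (simp add: field_simps)
    show "exp 1 * n / (r + 1) \<le> exp 1 * n / r"
      using pos by (intro divide_left_mono) auto
  qed (use pos in auto)
  finally have "2 * (exp 1 * n / (r + 1)) ^ (r + 1) * ln (real n * R)
      \<le> 2 * (exp 1 * n * (exp 1 * n / r) ^ r) * ln (real n * R)"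
    using ln_nR_pos by (intro mult_right_mono) auto
  then have "phase_length (r + 1) \<le> exp 1 * real n * phase_length r"
    by (simp add: phase_length_def mult_ac)
  then show ?thesis
    using True by (simp add: next_strength_def)
next
  case False
  have "1 \<le> exp 1 * real n"
    using six_le_n mult_mono[of 1 "exp 1" 1 "real n"] by simp
  moreover have "next_strength r = r"
    using False assms by (simp add: next_strength_def)
  ultimately show ?thesis
    using phase_length_nonneg mult_right_mono[of 1 _ "phase_length r"] by simp
qed

lemma strength_cost_nonneg: "0 \<le> strength_cost r"
  using phase_length_nonneg by (simp add: strength_cost_def)

lemma strength_potential_nonneg:
  assumes "real u \<le> phase_length r"
  shows "0 \<le> strength_potential r u"
  using assms strength_cost_nonneg by (auto simp: strength_potential_def)

lemma level_cost_nonneg: "0 \<le> level_cost"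
  using strength_potential_nonneg[of 0 1] phase_length_nonneg by (simp add: level_cost_def)

text \<open>The next phase is at most \<open>en\<close> times longer, but is only reached with probability
  at most \<open>1/(nR)\<close>, and \<open>nR \<ge> 6n \<ge> 2en\<close>.\<close>
lemma strength_potential_le_strength_cost:
  assumes "2 \<le> r" "r \<le> n div 2"
  shows "strength_potential r 0 \<le> strength_cost r"
proof -
  define T where "T = phase_length r"
  have T: "0 \<le> T"
    using phase_length_nonneg by (simp add: T_def)
  have "(1 - success_prob r) powr T * strength_cost (next_strength r)
      \<le> 1 / (real n * R) * (2 * (exp 1 * real n * T + 1))"
    using phase_failure_prob_le phase_length_next_strength_le assms strength_cost_nonneg nR_bounds
    by (intro mult_mono) (auto simp: T_def strength_cost_def)
  also have "\<dots> \<le> T + 1"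
  proof -
    have "exp 1 * real n * T \<le> 3 * real n * T"
      using exp_le T by (intro mult_right_mono) auto
    moreover have "6 * real n * T \<le> (real n * R) * T"
      using mult_right_mono[OF nR_bounds(1) T] .
    ultimately have "2 * (exp 1 * real n * T + 1) \<le> (T + 1) * (real n * R)"
      using nR_bounds(2) by (simp add: algebra_simps)
    then show ?thesis
      using nR_bounds by (simp add: field_simps)
  qed
  finally show ?thesis
    using assms by (simp add: strength_potential_def strength_cost_def T_def)
qed

lemma potential_after_failure_nonneg:
  assumes "1 \<le> r" "r \<le> n div 2"
  shows "0 \<le> potential_after_failure r u"
  using strength_potential_nonneg[of 0] strength_potential_nonneg[of "u + 1" r] phase_length_nonneg
  by (auto simp: potential_after_failure_def)

lemma strength_potential_failure_step:
  assumes r: "1 \<le> r" "r \<le> n div 2" and u: "real u \<le> phase_length r"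
  shows "(1 - success_prob r) * potential_after_failure r u + (if r = 1 then 0 else 1)
    \<le> strength_potential r u"
proof -
  define F where "F = 1 - success_prob r"
  define T where "T = phase_length r"
  define X where "X = strength_cost (next_strength r)"
  have F: "0 < F" "F \<le> 1"
    using success_prob_bounds[OF r] by (auto simp: F_def)
  have X: "0 \<le> X"
    using strength_cost_nonneg by (simp add: X_def)
  have Tu: "0 \<le> T - real u"
    using u by (simp add: T_def)
  have W: "strength_potential r u = F powr (T - real u) * X + (if r = 1 then 0 else T - real u + 1)"
    by (simp add: strength_potential_def F_def T_def X_def)
  show ?thesis
  proof (cases "T < real (u + 1)")
    case True
    have "F * potential_after_failure r u \<le> F * X"
      using True F strength_potential_le_strength_cost[OF next_strength_bounds[OF r]]
      by (intro mult_left_mono) (auto simp: potential_after_failure_def T_def X_def)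
    also have "\<dots> \<le> F powr (T - real u) * X"
      using True F X powr_mono'[of "T - real u" 1 F] by (intro mult_right_mono) auto
    finally have "F * potential_after_failure r u \<le> F powr (T - real u) * X" .
    moreover have "(if r = 1 then 0 else 1) \<le> (if r = 1 then 0 else T - real u + 1)"
      using Tu by simp
    ultimately show ?thesis
      unfolding W F_def[symmetric] by linarith
  next
    case False
    have Wn: "potential_after_failure r u
        = F powr (T - real (u + 1)) * X + (if r = 1 then 0 else T - real u)"
      using False by (simp add: potential_after_failure_def strength_potential_def F_def T_def X_def)
    have "F * potential_after_failure r u
        = (F * F powr (T - real (u + 1))) * X + (if r = 1 then 0 else F * (T - real u))"
      unfolding Wn by (simp add: distrib_left mult.assoc)
    also have "F * F powr (T - real (u + 1)) = F powr (T - real u)"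
      using F by (simp add: powr_mult_base)
    finally have "F * potential_after_failure r u
        = F powr (T - real u) * X + (if r = 1 then 0 else F * (T - real u))" .
    moreover have "(if r = 1 then 0 else F * (T - real u)) + (if r = 1 then 0 else 1)
        \<le> (if r = 1 then 0 else T - real u + 1)"
      using F Tu mult_right_mono[of F 1 "T - real u"] by simp
    ultimately show ?thesis
      unfolding W F_def[symmetric] by linarith
  qed
qed

text \<open>The one-step drift of the strength potential: \<open>2en + W'\<close> is what an improvement saves.
  At strength 1 the unit step cost is paid by the improvement probability \<open>p\<^sub>1 \<ge> 1/(2en)\<close>.\<close>
lemma strength_potential_drift:
  assumes "1 \<le> r" "r \<le> n div 2" "real u \<le> phase_length r"
  shows "potential_after_failure r u
      - success_prob r * (2 * exp 1 * real n + potential_after_failure r u) + 1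
    \<le> strength_potential r u"
proof -
  have "0 \<le> success_prob r * (2 * exp 1 * real n)"
    using success_prob_bounds[OF assms(1,2)] by simp
  then show ?thesis
    using strength_potential_failure_step[OF assms] one_le_success_prob_1
    by (cases "r = 1") (auto simp: algebra_simps)
qed

definition valid_state :: "bool list \<Rightarrow> nat \<Rightarrow> nat \<Rightarrow> bool" where
  "valid_state x r u \<longleftrightarrow>
     length x = n \<and> LeadingOnes x < n \<and> 1 \<le> r \<and> r \<le> n div 2 \<and> real u \<le> phase_length r"

text \<open>Invalid states are unreachable; giving them potential \<open>\<infinity>\<close> makes the drift condition
  trivial there, so no invariant of the algorithm has to be proved separately.\<close>
definition potential :: "sd_state \<Rightarrow> ennreal" where
  "potential s = (case s of (x, r, u, found) \<Rightarrow>
     if found then 0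
     else if valid_state x r u
     then ennreal (level_cost * (real n - real (LeadingOnes x)) + strength_potential r u)
     else \<infinity>)"

lemma sd_update_LeadingOnes:
  "sd_update LO n R x r u y =
    (if LeadingOnes x < LeadingOnes y then (y, 1, 0, optimal LO n y)
     else (let x' = if LeadingOnes y = LeadingOnes x \<and> r = 1 then y else x in
       if phase_length r < real (u + 1) then (x', next_strength r, 0, optimal LO n y)
       else (x', r, u + 1, optimal LO n y)))"
  by (simp add: sd_update_def Let_def phase_length_def next_strength_def)

lemma potential_sd_update_le:
  assumes x: "valid_state x r u" and y: "length y = n"
  shows "potential (sd_update LO n R x r u y) \<le> ennreal
    (if LeadingOnes x < LeadingOnes y
     then level_cost * (real n - real (LeadingOnes x) - 1) + strength_potential 1 0
     else level_cost * (real n - real (LeadingOnes x)) + potential_after_failure r u)"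
proof (cases "LeadingOnes x < LeadingOnes y")
  case True
  have "level_cost * (real n - LeadingOnes y) \<le> level_cost * (real n - LeadingOnes x - 1)"
    using True level_cost_nonneg by (intro mult_left_mono) auto
  moreover have "\<not> optimal LO n y \<Longrightarrow> valid_state y 1 0"
    using y six_le_n phase_length_nonneg LeadingOnes_le_length[of y] optimal_LeadingOnes_iff[OF y]
    by (auto simp: valid_state_def)
  ultimately show ?thesis
    using True by (simp add: sd_update_LeadingOnes potential_def ennreal_leI)
next
  case False
  define x' where "x' = (if LeadingOnes y = LeadingOnes x \<and> r = 1 then y else x)"
  have x': "length x' = n" "LeadingOnes x' = LeadingOnes x"
    using x y False by (auto simp: x'_def valid_state_def)
  have "\<not> optimal LO n y"
    using False x optimal_LeadingOnes_iff[OF y] by (auto simp: valid_state_def)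
  then have update: "sd_update LO n R x r u y =
      (if phase_length r < real (u + 1) then (x', next_strength r, 0, False) else (x', r, u + 1, False))"
    using False by (simp add: sd_update_LeadingOnes x'_def Let_def)
  show ?thesis
  proof (cases "phase_length r < real (u + 1)")
    case True
    then have "valid_state x' (next_strength r) 0"
      using x x' next_strength_bounds[of r] phase_length_nonneg by (auto simp: valid_state_def)
    then show ?thesis
      using True False by (simp add: update potential_def potential_after_failure_def x'(2))
  next
    case reset: False
    then have "valid_state x' r (u + 1)"
      using x x' by (auto simp: valid_state_def)
    then show ?thesis
      using reset False by (simp add: update potential_def potential_after_failure_def x'(2))
  qed
qed

lemma success_prob_le_prob_improvement:
  assumes "valid_state x r u"
  shows "success_prob r \<le> measure_pmf.prob (mutate (real r / real n) x) {y. LeadingOnes x < LeadingOnes y}"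
proof -
  define q where "q = real r / real n"
  have q: "0 \<le> q" "q \<le> 1" and k: "LeadingOnes x < length x" "length x = n"
    using assms six_le_n by (auto simp: q_def valid_state_def field_simps)
  have "ennreal (success_prob r) \<le> ennreal (q * (1 - q) ^ LeadingOnes x)"
    using q k by (intro ennreal_leI) (simp add: success_prob_def q_def[symmetric] mult_left_mono power_decreasing)
  also have "\<dots> \<le> emeasure (mutate q x) {y. LeadingOnes x < LeadingOnes y}"
    using emeasure_mutate_LeadingOnes_increase[OF q k(1)] .
  also have "\<dots> = ennreal (measure_pmf.prob (mutate q x) {y. LeadingOnes x < LeadingOnes y})"
    by (simp add: measure_pmf.emeasure_eq_measure)
  finally show ?thesis
    by (simp add: q_def)
qed

lemma potential_sd_step_le:
  assumes V: "valid_state x r u"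
  shows "(\<integral>\<^sup>+s. potential s \<partial>sd_step LO n R (x, r, u, False)) + 1 \<le> potential (x, r, u, False)"
proof -
  define k where "k = real (LeadingOnes x)"
  define W' where "W' = potential_after_failure r u"
  define a where "a = level_cost * (real n - k - 1) + strength_potential 1 0"
  define b where "b = level_cost * (real n - k) + W'"
  have r: "1 \<le> r" "r \<le> n div 2" "real u \<le> phase_length r" and k: "k + 1 \<le> real n"
    using V by (auto simp: valid_state_def k_def)
  have a: "0 \<le> a"
    using k level_cost_nonneg strength_potential_nonneg[of 0 1] phase_length_nonneg by (simp add: a_def)
  have ba: "b - a = 2 * exp 1 * real n + W'"
    by (simp add: a_def b_def level_cost_def algebra_simps)
  have "0 \<le> 2 * exp 1 * real n" "0 \<le> W'"
    using potential_after_failure_nonneg[OF r(1,2)] by (simp_all add: W'_def)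
  then have ab: "a \<le> b"
    using ba by linarith
  have "(\<integral>\<^sup>+s. potential s \<partial>sd_step LO n R (x, r, u, False))
      = (\<integral>\<^sup>+y. potential (sd_update LO n R x r u y) \<partial>mutate (real r / real n) x)"
    by (simp add: sd_step_def)
  also have "\<dots> \<le> ennreal (b - success_prob r * (b - a))"
  proof (rule nn_integral_pmf_le_two_level)
    fix y
    assume "y \<in> set_pmf (mutate (real r / real n) x)"
    then have y: "length y = n"
      using V length_mutate by (auto simp: valid_state_def)
    show "potential (sd_update LO n R x r u y)
        \<le> ennreal (if y \<in> {y. LeadingOnes x < LeadingOnes y} then a else b)"
      using potential_sd_update_le[OF V y] by (simp only: a_def b_def k_def W'_def mem_Collect_eq)
  qed (use a ab success_prob_le_prob_improvement[OF V] in auto)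
  finally have "(\<integral>\<^sup>+s. potential s \<partial>sd_step LO n R (x, r, u, False)) + 1
      \<le> ennreal (b - success_prob r * (b - a)) + ennreal 1"
    by (simp add: add_right_mono)
  also have "\<dots> = ennreal (b - success_prob r * (b - a) + 1)"
  proof -
    have "success_prob r * (b - a) \<le> b - a"
      using ab success_prob_bounds[OF r(1,2)] mult_right_mono[of "success_prob r" 1 "b - a"] by simp
    then show ?thesis
      using a ab by (intro ennreal_plus[symmetric]) auto
  qed
  also have "\<dots> \<le> ennreal (level_cost * (real n - k) + strength_potential r u)"
    using strength_potential_drift[OF r] unfolding ba by (intro ennreal_leI) (simp add: b_def W'_def)
  also have "\<dots> = potential (x, r, u, False)"
    using V by (simp add: potential_def k_def)
  finally show ?thesis .
qed

lemma potential_drift: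
  "(\<integral>\<^sup>+s'. potential s' \<partial>sd_step LO n R s) + indicator unfinished s \<le> potential s"
proof -
  obtain x r u found where s: "s = (x, r, u, found)"
    by (cases s) auto
  consider "found" | "\<not> found" "valid_state x r u" | "\<not> found" "\<not> valid_state x r u"
    by blast
  then show ?thesis
  proof cases
    case 1
    then show ?thesis
      by (simp add: s sd_step_def potential_def)
  next
    case 2
    then show ?thesis
      using potential_sd_step_le[of x r u] by (simp add: s)
  next
    case 3
    then show ?thesis
      by (simp add: s potential_def)
  qed
qed

lemma expected_runtime_le_initial_potential:
  "sd_expected_runtime LO n R \<le> (\<integral>\<^sup>+s. potential s \<partial>sd_init LO n)"
proof -
  have "(\<Sum>t. ennreal (measure_pmf.prob (sd_state_after LO n R t) unfinished))
      \<le> (\<integral>\<^sup>+s. potential s \<partial>sd_state_after LO n R 0)"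
    by (rule suminf_prob_le_potential[OF _ potential_drift]) simp
  then show ?thesis
    by (simp add: sd_expected_runtime_def)
qed

lemma initial_potential_le:
  "(\<integral>\<^sup>+s. potential s \<partial>sd_init LO n) \<le> ennreal (level_cost * real n + strength_potential 1 0)"
proof -
  define S where "S = {xs :: bool list. length xs = n}"
  have S: "finite S" "S \<noteq> {}"
    using finite_lists_length_eq[of "UNIV :: bool set" n]
    by (auto simp: S_def intro!: exI[of _ "replicate n True"])
  have "potential (x, 1, 0, optimal LO n x) \<le> ennreal (level_cost * real n + strength_potential 1 0)"
    if "x \<in> S" for x
  proof -
    have "\<not> optimal LO n x \<Longrightarrow> valid_state x 1 0"
      using that six_le_n phase_length_nonneg LeadingOnes_le_length[of x] optimal_LeadingOnes_iff[of x n]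
      by (auto simp: valid_state_def S_def)
    moreover have "level_cost * (real n - LeadingOnes x) \<le> level_cost * real n"
      using level_cost_nonneg by (intro mult_left_mono) auto
    ultimately show ?thesis
      by (auto simp: potential_def intro: ennreal_leI)
  qed
  then have "(\<integral>\<^sup>+s. potential s \<partial>sd_init LO n)
      \<le> (\<integral>\<^sup>+s. ennreal (level_cost * real n + strength_potential 1 0) \<partial>sd_init LO n)"
    using S by (intro nn_integral_mono_AE AE_pmfI) (auto simp: sd_init_def S_def[symmetric])
  then show ?thesis
    by simp
qed

lemma initial_potential_bound: "level_cost * real n + strength_potential 1 0 \<le> 30 * real n ^ 2"
proof -
  define L where "L = ln (real n * R)"
  have n: "6 \<le> real n" and R: "1 < R"
    using six_le_n n_plus_1_le_R by auto
  have L: "0 \<le> L / R" "L / R \<le> 2"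
  proof -
    have "L \<le> ln (R * R)"
      using n_plus_1_le_R R nR_bounds unfolding L_def by (subst ln_le_cancel_iff) (auto intro: mult_right_mono)
    also have "\<dots> \<le> 2 * R"
      using ln_le_minus_one[of R] R by (simp add: ln_mult)
    finally show "L / R \<le> 2"
      using R by (simp add: field_simps)
    show "0 \<le> L / R"
      using ln_nR_pos R by (simp add: L_def)
  qed
  have "next_strength 1 = 2"
    using six_le_n by (simp add: next_strength_def)
  then have "strength_potential 1 0 = (1 - success_prob 1) powr phase_length 1 * strength_cost 2"
    by (simp add: strength_potential_def)
  also have "\<dots> \<le> 1 / (real n * R) * strength_cost 2"
    using phase_failure_prob_le[of 1] six_le_n strength_cost_nonneg by (intro mult_right_mono) auto
  also have "\<dots> = exp 1 ^ 2 * real n * (L / R) + 2 / (real n * R)"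
    using n R by (simp add: strength_cost_def phase_length_def L_def power2_eq_square field_simps)
  also have "\<dots> \<le> 3 ^ 2 * real n * 2 + 1"
    using exp_le n L nR_bounds by (intro add_mono mult_mono power_mono) auto
  finally have "strength_potential 1 0 \<le> 18 * real n + 1"
    by simp
  moreover have "exp 1 * real n \<le> 3 * real n"
    using exp_le n by (intro mult_right_mono) auto
  ultimately have "level_cost \<le> 24 * real n + 1"
    by (simp add: level_cost_def)
  then have "level_cost * real n \<le> (24 * real n + 1) * real n"
    by (rule mult_right_mono) simp
  then have "level_cost * real n \<le> 24 * real n ^ 2 + real n"
    by (simp add: power2_eq_square algebra_simps)
  moreover have "6 * real n \<le> real n ^ 2"
    using mult_right_mono[OF n, of "real n"] by (simp add: power2_eq_square)
  ultimately show ?thesis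
    using \<open>strength_potential 1 0 \<le> 18 * real n + 1\<close> n by linarith
qed

end

theorem mainTheorem6:
  fixes c :: real
  shows "\<exists>C N. \<forall>(n::nat) (R::real). n \<ge> N \<and> even n \<and> real n + 1 \<le> R \<and> R \<le> real n powr c \<longrightarrow>
           sd_expected_runtime (\<lambda>x. real (LeadingOnes x)) n R \<le> ennreal (C * real n ^ 2)"
proof (intro exI allI impI)
  fix n :: nat and R :: real
  assume "6 \<le> n \<and> even n \<and> real n + 1 \<le> R \<and> R \<le> real n powr c"
  then interpret sd_leading_ones n R
    by unfold_locales auto
  have "sd_expected_runtime LO n R \<le> ennreal (level_cost * real n + strength_potential 1 0)"
    using expected_runtime_le_initial_potential initial_potential_le by (rule order.trans)
  also have "\<dots> \<le> ennreal (30 * real n ^ 2)"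
    using initial_potential_bound by (rule ennreal_leI)
  finally show "sd_expected_runtime LO n R \<le> ennreal (30 * real n ^ 2)" .
qed

end
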